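(* Let $k$ be a positive integer and let $\Pi_0,\Pi_1,\Pi\in\mathrm{Part}_2(2k)$, with $\Pi_0$ and $\Pi_1$ perfect matchings, and assume $\#(\Pi_0\vee\Pi_1\vee\Pi)=1$. Then $$\#(\Pi_0\vee\Pi)+\#(\Pi_1\vee\Pi)\le 1+\#\Pi\le k+1,$$ and moreover, writing $r=\#(\Pi_0\vee\Pi_1)$, if $r>1$ then $$\#(\Pi_0\vee\Pi)+\#(\Pi_1\vee\Pi)\le k+1-\lfloor r/2\rfloor.$$
   Context: $\mathrm{Part}(k)$ is the set of set partitions of $\{1,\dots,k\}$ (families of nonempty pairwise disjoint subsets, called parts, whose union is $\{1,\dots,k\}$). $\Sigma$ refines $\Pi$ if every part of $\Sigma$ is contained in a part of $\Pi$. $\Pi\vee\Sigma$ is the finest partition refined by both $\Pi$ and $\Sigma$. A perfect matching is a partition all of whose parts have cardinality 2. $\mathrm{Part}_2(k)$ is the set of partitions all of whose parts have cardinality at least 2. $\#S$ is the cardinality of $S$ and $\lfloor x\rfloor$ the integer part. *)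

theory Defs
  imports Main
begin

definition is_partition :: "'a set \<Rightarrow> 'a set set \<Rightarrow> bool" where
  "is_partition S P \<longleftrightarrow> (\<forall>B\<in>P. B \<noteq> {}) \<and>
     (\<forall>B\<in>P. \<forall>C\<in>P. B \<noteq> C \<longrightarrow> B \<inter> C = {}) \<and> \<Union>P = S"

definition Part :: "nat \<Rightarrow> nat set set set" where
  "Part k = {P. is_partition {1..k} P}"

definition Part2 :: "nat \<Rightarrow> nat set set set" where
  "Part2 k = {P \<in> Part k. \<forall>B\<in>P. 2 \<le> card B}"

definition perfect_matching :: "'a set set \<Rightarrow> bool" where
  "perfect_matching P \<longleftrightarrow> (\<forall>B\<in>P. card B = 2)"

definition refines :: "'a set set \<Rightarrow> 'a set set \<Rightarrow> bool" where
  "refines \<Sigma> \<Pi> \<longleftrightarrow> (\<forall>B\<in>\<Sigma>. \<exists>C\<in>\<Pi>. B \<subseteq> C)"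

definition join :: "'a set \<Rightarrow> 'a set set \<Rightarrow> 'a set set \<Rightarrow> 'a set set" where
  "join S P Q = (THE R. is_partition S R \<and> refines P R \<and> refines Q R \<and>
     (\<forall>R'. is_partition S R' \<and> refines P R' \<and> refines Q R' \<longrightarrow> refines R R'))"

end

theory Submission
  imports Defs
begin

text \<open>Read a partition as a hypergraph whose edges are its blocks: joins become unions, and
  the number of blocks of a join is the number of connected components. The first inequality
  is then semimodularity of the partition lattice: a new edge merges at least as many
  components of a finer hypergraph as of a coarser one.

  For the refined bound, keep one pair inside each block of \<open>P\<close>; by semimodularity again this
  can only increase \<open>#(P0 \<or> P) + #(P1 \<or> P) - 2 #(P0 \<or> P1 \<or> P)\<close>. For a partial matching
  \<open>M\<close> and perfect matchings \<open>B\<close>, \<open>C\<close> of a \<open>2k\<close>-set, the quantity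
  \<open>2k + 2 #(M \<or> B \<or> C) - #(M \<or> B) - #(M \<or> C) - #(B \<or> C) - #M\<close> is an Euler genus, hence
  nonnegative. This is proved by induction on \<open>M\<close>: delete a pair \<open>{a, b}\<close> of \<open>M\<close> and join
  the mates of \<open>a\<close> and \<open>b\<close> in \<open>B\<close> and in \<open>C\<close>. The one delicate case, where \<open>a\<close> and \<open>b\<close> lie on
  different alternating cycles of \<open>B \<or> C\<close>, is settled by a parity argument. With
  \<open>#(P0 \<or> P1 \<or> P) = 1\<close> the two inequalities add up to
  \<open>2 (#(P0 \<or> P) + #(P1 \<or> P)) + #(P0 \<or> P1) \<le> 2k + 3\<close>.\<close>

subsection \<open>Connected components of set families\<close>

definition linked :: "'a set set \<Rightarrow> ('a \<times> 'a) set" where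
  "linked F = (\<Union>e\<in>F. e \<times> e)"

definition conn :: "'a set \<Rightarrow> 'a set set \<Rightarrow> ('a \<times> 'a) set" where
  "conn S F = Restr ((linked F)\<^sup>*) S"

definition ncomp :: "'a set \<Rightarrow> 'a set set \<Rightarrow> nat" where
  "ncomp S F = card (S // conn S F)"

definition ncomp_meeting :: "'a set \<Rightarrow> 'a set set \<Rightarrow> 'a set \<Rightarrow> nat" where
  "ncomp_meeting S F W = card ((\<lambda>x. conn S F `` {x}) ` W)"

lemma linked_Un: "linked (F \<union> G) = linked F \<union> linked G"
  by (auto simp: linked_def)

lemma linked_mono: "F \<subseteq> G \<Longrightarrow> linked F \<subseteq> linked G"
  by (auto simp: linked_def)

lemma equiv_conn: "equiv S (conn S F)"
proof -
  have "sym ((linked F)\<^sup>*)"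
    by (rule sym_rtrancl) (auto simp: linked_def sym_def)
  then show ?thesis
    unfolding conn_def equiv_def refl_on_def sym_def trans_def
    by (auto intro: rtrancl_trans)
qed

lemma conn_mono: "linked F \<subseteq> linked G \<Longrightarrow> conn S F \<subseteq> conn S G"
  unfolding conn_def using rtrancl_mono by blast

lemma conn_restrict: "S' \<subseteq> S \<Longrightarrow> conn S' F = Restr (conn S F) S'"
  by (auto simp: conn_def)

lemma conn_edge: "e \<in> F \<Longrightarrow> x \<in> e \<Longrightarrow> y \<in> e \<Longrightarrow> x \<in> S \<Longrightarrow> y \<in> S \<Longrightarrow> (x, y) \<in> conn S F"
  by (auto simp: conn_def linked_def)

lemma conn_sym: "(x, y) \<in> conn S F \<Longrightarrow> (y, x) \<in> conn S F"
  using equiv_conn[of S F] by (blast elim: equivE dest: symD)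

lemma conn_trans: "(x, y) \<in> conn S F \<Longrightarrow> (y, z) \<in> conn S F \<Longrightarrow> (x, z) \<in> conn S F"
  using equiv_conn[of S F] by (blast elim: equivE dest: transD)

lemma conn_least:
  assumes E: "equiv S E" and F: "\<Union>F \<subseteq> S" and edges: "\<And>e. e \<in> F \<Longrightarrow> e \<times> e \<subseteq> E"
  shows "conn S F \<subseteq> E"
proof safe
  fix x y assume "(x, y) \<in> conn S F"
  then have x: "x \<in> S" and path: "(x, y) \<in> (linked F)\<^sup>*"
    by (auto simp: conn_def)
  from path show "(x, y) \<in> E"
  proof (induction rule: rtrancl_induct)
    case base
    show ?case using E x by (auto simp: equiv_def refl_on_def)
  next
    case (step y z)
    then have "(y, z) \<in> E" using edges by (auto simp: linked_def)
    with step.IH show ?case using E by (auto simp: equiv_def trans_def)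
  qed
qed

lemma conn_class_subset:
  assumes "x \<in> K" and closed: "\<And>e. e \<in> F \<Longrightarrow> e \<inter> K \<noteq> {} \<Longrightarrow> e \<subseteq> K"
  shows "conn S F `` {x} \<subseteq> K"
proof
  fix y assume "y \<in> conn S F `` {x}"
  then have "(x, y) \<in> (linked F)\<^sup>*" by (auto simp: conn_def)
  then show "y \<in> K"
  proof (induction rule: rtrancl_induct)
    case base
    show ?case using \<open>x \<in> K\<close> .
  next
    case (step y z)
    then obtain e where "e \<in> F" "y \<in> e" "z \<in> e" by (auto simp: linked_def)
    with step.IH closed show ?case by blast
  qed
qed


subsection \<open>Partitions and joins\<close>

lemma is_partition_quotient: "equiv S E \<Longrightarrow> is_partition S (S // E)"
  unfolding is_partition_def
  by (metis Union_quotient in_quotient_imp_non_empty quotient_disj)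

lemma partition_block_nonempty: "is_partition S P \<Longrightarrow> K \<in> P \<Longrightarrow> K \<noteq> {}"
  by (simp add: is_partition_def)

lemma partition_block_subset: "is_partition S P \<Longrightarrow> K \<in> P \<Longrightarrow> K \<subseteq> S"
  unfolding is_partition_def by blast

lemma partition_cover: "is_partition S P \<Longrightarrow> x \<in> S \<Longrightarrow> \<exists>K\<in>P. x \<in> K"
  unfolding is_partition_def by blast

lemma partition_block_unique:
  "is_partition S P \<Longrightarrow> K \<in> P \<Longrightarrow> K' \<in> P \<Longrightarrow> x \<in> K \<Longrightarrow> x \<in> K' \<Longrightarrow> K = K'"
  unfolding is_partition_def by blast

lemma conn_partition_class:
  assumes P: "is_partition S P" and "K \<in> P" "x \<in> K"
  shows "conn S P `` {x} = K"
proof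
  show "conn S P `` {x} \<subseteq> K"
    using assms partition_block_unique[OF P] by (intro conn_class_subset) blast+
  show "K \<subseteq> conn S P `` {x}"
    using assms partition_block_subset[OF P \<open>K \<in> P\<close>] by (blast intro: conn_edge)
qed

lemma quotient_conn_partition:
  assumes P: "is_partition S P"
  shows "S // conn S P = P"
proof
  show "S // conn S P \<subseteq> P"
  proof
    fix K assume "K \<in> S // conn S P"
    then obtain x where "x \<in> S" "K = conn S P `` {x}" by (auto elim: quotientE)
    moreover obtain L where "L \<in> P" "x \<in> L"
      using partition_cover[OF P \<open>x \<in> S\<close>] by blast
    ultimately show "K \<in> P" using conn_partition_class[OF P] by simp
  qed
  show "P \<subseteq> S // conn S P"
  proof
    fix K assume "K \<in> P"
    then obtain x where "x \<in> K" using partition_block_nonempty[OF P] by blast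
    moreover have "x \<in> S" using partition_block_subset[OF P \<open>K \<in> P\<close>] \<open>x \<in> K\<close> by blast
    ultimately show "K \<in> S // conn S P"
      using conn_partition_class[OF P \<open>K \<in> P\<close>] by (metis quotientI)
  qed
qed

lemma refines_antisym:
  assumes "is_partition S P" "is_partition S Q" "refines P Q" "refines Q P"
  shows "P = Q"
proof -
  have "P \<subseteq> Q" if P: "is_partition S P" and PQ: "refines P Q" and QP: "refines Q P" for P Q
  proof
    fix K assume "K \<in> P"
    then obtain L where "L \<in> Q" "K \<subseteq> L" using PQ by (auto simp: refines_def)
    then obtain K' where "K' \<in> P" "L \<subseteq> K'" using QP by (auto simp: refines_def)
    obtain x where "x \<in> K" using partition_block_nonempty[OF P \<open>K \<in> P\<close>] by blast
    then have "K = K'"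
      using partition_block_unique[OF P \<open>K \<in> P\<close> \<open>K' \<in> P\<close>] \<open>K \<subseteq> L\<close> \<open>L \<subseteq> K'\<close> by blast
    with \<open>K \<subseteq> L\<close> \<open>L \<subseteq> K'\<close> \<open>L \<in> Q\<close> show "K \<in> Q" by simp
  qed
  with assms show ?thesis by blast
qed

lemma quotient_square_subset: "equiv S E \<Longrightarrow> K \<in> S // E \<Longrightarrow> K \<times> K \<subseteq> E"
  using quotient_eq_iff by fast

lemma join_eq:
  assumes P: "is_partition S P" and Q: "is_partition S Q"
  shows "join S P Q = S // conn S (P \<union> Q)"
  unfolding join_def
proof (rule the_equality)
  let ?J = "S // conn S (P \<union> Q)"
  have J: "is_partition S ?J" by (rule is_partition_quotient[OF equiv_conn])
  have coarser: "refines R ?J" if R: "R \<subseteq> P \<union> Q" for R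
    unfolding refines_def
  proof
    fix K assume "K \<in> R"
    then have K: "K \<in> P \<union> Q" using R by blast
    then obtain x where "x \<in> K" using partition_block_nonempty[OF P] partition_block_nonempty[OF Q] by blast
    have "K \<subseteq> S" using K partition_block_subset[OF P] partition_block_subset[OF Q] by blast
    have "conn S (P \<union> Q) `` {x} \<in> ?J" using \<open>x \<in> K\<close> \<open>K \<subseteq> S\<close> by (blast intro: quotientI)
    moreover have "K \<subseteq> conn S (P \<union> Q) `` {x}"
      using K \<open>x \<in> K\<close> \<open>K \<subseteq> S\<close> by (blast intro: conn_edge)
    ultimately show "\<exists>L\<in>?J. K \<subseteq> L" by blast
  qed
  have finest: "refines ?J R" if R: "is_partition S R" "refines P R" "refines Q R" for R
    unfolding refines_def
  proof
    fix K assume "K \<in> ?J"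
    then obtain x where x: "x \<in> S" "K = conn S (P \<union> Q) `` {x}" by (auto elim: quotientE)
    then obtain L where L: "L \<in> R" "x \<in> L" using partition_cover[OF R(1)] by blast
    have "K \<subseteq> L"
      unfolding x(2)
    proof (rule conn_class_subset[OF L(2)])
      fix e assume e: "e \<in> P \<union> Q" "e \<inter> L \<noteq> {}"
      then obtain L' where "L' \<in> R" "e \<subseteq> L'" using R(2,3) unfolding refines_def by blast
      with e show "e \<subseteq> L" using partition_block_unique[OF R(1) L(1)] by blast
    qed
    with L show "\<exists>L\<in>R. K \<subseteq> L" by blast
  qed
  have PJ: "refines P ?J" and QJ: "refines Q ?J"
    by (rule coarser[OF Un_upper1], rule coarser[OF Un_upper2])
  show "is_partition S ?J \<and> refines P ?J \<and> refines Q ?J \<and>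
      (\<forall>R. is_partition S R \<and> refines P R \<and> refines Q R \<longrightarrow> refines ?J R)"
    using J PJ QJ finest by blast
  fix R assume R: "is_partition S R \<and> refines P R \<and> refines Q R \<and>
      (\<forall>R'. is_partition S R' \<and> refines P R' \<and> refines Q R' \<longrightarrow> refines R R')"
  then have "refines R ?J" and "refines ?J R" using J PJ QJ finest by blast+
  with R J show "R = ?J" using refines_antisym by blast
qed

lemma conn_quotient_Un:
  assumes F: "\<Union>F \<subseteq> S" and G: "\<Union>G \<subseteq> S"
  shows "conn S (S // conn S F \<union> G) = conn S (F \<union> G)"
proof
  show "conn S (S // conn S F \<union> G) \<subseteq> conn S (F \<union> G)"
  proof (rule conn_least[OF equiv_conn])
    show "\<Union>(S // conn S F \<union> G) \<subseteq> S"
      using G Union_quotient[OF equiv_conn, of S F] by blast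
    fix e assume "e \<in> S // conn S F \<union> G"
    then show "e \<times> e \<subseteq> conn S (F \<union> G)"
    proof
      assume "e \<in> S // conn S F"
      then have "e \<times> e \<subseteq> conn S F" by (rule quotient_square_subset[OF equiv_conn])
      then show ?thesis using conn_mono[OF linked_mono[of F "F \<union> G"]] by blast
    next
      assume "e \<in> G"
      then show ?thesis using G by (blast intro: conn_edge)
    qed
  qed
  have "linked F \<subseteq> linked (S // conn S F)"
  proof
    fix p assume "p \<in> linked F"
    then obtain e x y where "p = (x, y)" "e \<in> F" "x \<in> e" "y \<in> e" by (auto simp: linked_def)
    moreover have "x \<in> S" "y \<in> S" using F calculation by blast+
    ultimately have "x \<in> conn S F `` {x}" "y \<in> conn S F `` {x}" "conn S F `` {x} \<in> S // conn S F"
      by (auto intro: quotientI conn_edge)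
    then show "p \<in> linked (S // conn S F)"
      using \<open>p = (x, y)\<close> by (auto simp: linked_def)
  qed
  then show "conn S (F \<union> G) \<subseteq> conn S (S // conn S F \<union> G)"
    by (intro conn_mono) (auto simp: linked_Un)
qed

lemma card_join: "is_partition S P \<Longrightarrow> is_partition S Q \<Longrightarrow> card (join S P Q) = ncomp S (P \<union> Q)"
  by (simp add: join_eq ncomp_def)

lemma card_join_join:
  assumes "is_partition S P" "is_partition S Q" "is_partition S R"
  shows "card (join S (join S P Q) R) = ncomp S (P \<union> Q \<union> R)"
proof -
  have "\<Union>(P \<union> Q) \<subseteq> S" "\<Union>R \<subseteq> S"
    using assms partition_block_subset by blast+
  then show ?thesis
    using assms join_eq[OF is_partition_quotient[OF equiv_conn] assms(3)]
    by (simp add: join_eq conn_quotient_Un ncomp_def)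
qed

lemma card_partition_le:
  assumes "finite S" "is_partition S P" "\<forall>K\<in>P. 2 \<le> card K"
  shows "2 * card P \<le> card S"
proof -
  have "card S = (\<Sum>K\<in>P. card K)"
    using assms(1,2) card_Union_disjoint[of P]
    by (auto simp: is_partition_def pairwise_def disjnt_def intro: finite_subset)
  moreover have "(\<Sum>K\<in>P. 2) \<le> (\<Sum>K\<in>P. card K)" using assms(3) by (intro sum_mono) blast
  ultimately show ?thesis by simp
qed

lemma finite_quotient_conn: "finite S \<Longrightarrow> finite (S // conn S F)"
  by (rule finite_quotient) (auto simp: conn_def)

lemma ncomp_cong: "linked F = linked G \<Longrightarrow> ncomp S F = ncomp S G"
  by (simp add: ncomp_def conn_def)

lemma conn_self: "x \<in> S \<Longrightarrow> x \<in> conn S F `` {x}"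
  by (auto simp: conn_def)

lemma card_quotient_split:
  assumes fin: "finite S" and E: "equiv S E" and W: "W \<subseteq> S"
  shows "card (S // E) = card {K \<in> S // E. K \<inter> W = {}} + card ((\<lambda>x. E `` {x}) ` W)"
proof -
  have "S // E = {K \<in> S // E. K \<inter> W = {}} \<union> (\<lambda>x. E `` {x}) ` W"
  proof (intro equalityI subsetI)
    fix K assume K: "K \<in> S // E"
    show "K \<in> {K \<in> S // E. K \<inter> W = {}} \<union> (\<lambda>x. E `` {x}) ` W"
    proof (cases "K \<inter> W = {}")
      case False
      then obtain w where "w \<in> K" "w \<in> W" by blast
      then have "K = E `` {w}" using K E by (metis Image_singleton_iff equiv_class_eq quotientE)
      with \<open>w \<in> W\<close> show ?thesis by blast
    qed (use K in blast)
  qed (use W in \<open>auto intro: quotientI\<close>)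
  moreover have "{K \<in> S // E. K \<inter> W = {}} \<inter> (\<lambda>x. E `` {x}) ` W = {}"
    using E W by (auto dest: equiv_class_self)
  moreover have "finite (S // E)" using fin E by (simp add: finite_quotient equiv_type)
  ultimately show ?thesis
    by (metis (no_types, lifting) card_Un_disjoint finite_Un)
qed

lemma card_quotient_local_change:
  assumes fin: "finite S" and E: "equiv S E" and E': "equiv S E'" and sub: "E \<subseteq> E'"
    and W: "W \<subseteq> S"
    and unchanged: "\<And>x. x \<in> S \<Longrightarrow> E `` {x} \<inter> W = {} \<Longrightarrow> E' `` {x} \<subseteq> E `` {x}"
  shows "card (S // E) + card ((\<lambda>x. E' `` {x}) ` W) = card (S // E') + card ((\<lambda>x. E `` {x}) ` W)"
proof -
  have "{K \<in> S // E. K \<inter> W = {}} = {K \<in> S // E'. K \<inter> W = {}}"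
  proof (intro equalityI subsetI)
    fix K assume "K \<in> {K \<in> S // E. K \<inter> W = {}}"
    then obtain x where "x \<in> S" "K = E `` {x}" "K \<inter> W = {}" by (auto elim: quotientE)
    moreover have "E' `` {x} = E `` {x}" using calculation unchanged sub by blast
    ultimately show "K \<in> {K \<in> S // E'. K \<inter> W = {}}" using quotientI[of x S E'] by simp
  next
    fix K assume "K \<in> {K \<in> S // E'. K \<inter> W = {}}"
    then obtain x where "x \<in> S" "K = E' `` {x}" "K \<inter> W = {}" by (auto elim: quotientE)
    moreover have "E `` {x} \<inter> W = {}" using calculation sub by blast
    then have "E' `` {x} = E `` {x}" using \<open>x \<in> S\<close> unchanged sub by blast
    ultimately show "K \<in> {K \<in> S // E. K \<inter> W = {}}" using quotientI[of x S E] by simp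
  qed
  then show ?thesis
    using card_quotient_split[OF fin E W] card_quotient_split[OF fin E' W] by simp
qed

lemma ncomp_local_change:
  assumes fin: "finite S" and G: "\<Union>G \<subseteq> S" and FG: "F \<subseteq> G" and W: "W \<subseteq> S"
    and new: "\<And>e. e \<in> G - F \<Longrightarrow> e \<subseteq> W"
  shows "ncomp S F + ncomp_meeting S G W = ncomp S G + ncomp_meeting S F W"
  unfolding ncomp_def ncomp_meeting_def
proof (rule card_quotient_local_change[OF fin equiv_conn equiv_conn _ W])
  show "conn S F \<subseteq> conn S G" by (rule conn_mono[OF linked_mono[OF FG]])
  fix x assume x: "x \<in> S" and far: "conn S F `` {x} \<inter> W = {}"
  show "conn S G `` {x} \<subseteq> conn S F `` {x}"
  proof (rule conn_class_subset[OF conn_self[OF x]])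
    fix e assume e: "e \<in> G" "e \<inter> conn S F `` {x} \<noteq> {}"
    then obtain y where y: "y \<in> e" "(x, y) \<in> conn S F" by blast
    show "e \<subseteq> conn S F `` {x}"
    proof (cases "e \<in> F")
      case True
      have "(y, z) \<in> conn S F" if "z \<in> e" for z
        using True y(1) that e(1) G by (blast intro: conn_edge)
      then show ?thesis using y(2) equiv_conn[of S F] by (auto elim: equivE dest: transD)
    qed (use e y far new in blast)
  qed
qed

lemma ncomp_differ_within:
  assumes "finite S" "\<Union>F \<subseteq> S" "\<Union>G \<subseteq> S" "W \<subseteq> S"
    and "\<And>e. e \<in> F - G \<Longrightarrow> e \<subseteq> W" "\<And>e. e \<in> G - F \<Longrightarrow> e \<subseteq> W"
  shows "ncomp S F + ncomp_meeting S G W = ncomp S G + ncomp_meeting S F W"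
proof -
  have "ncomp S (F \<inter> G) + ncomp_meeting S F W = ncomp S F + ncomp_meeting S (F \<inter> G) W"
    "ncomp S (F \<inter> G) + ncomp_meeting S G W = ncomp S G + ncomp_meeting S (F \<inter> G) W"
    by (rule ncomp_local_change; use assms in blast)+
  then show ?thesis by linarith
qed

lemma ncomp_meeting_mono:
  assumes "finite W" "linked F \<subseteq> linked G"
  shows "ncomp_meeting S G W \<le> ncomp_meeting S F W"
proof -
  have "(\<lambda>x. conn S G `` {x}) ` W = (\<lambda>K. conn S G `` K) ` (\<lambda>x. conn S F `` {x}) ` W"
    using refines_equiv_class_eq2[OF conn_mono[OF assms(2)] equiv_conn equiv_conn]
    by (simp add: image_image)
  then show ?thesis
    unfolding ncomp_meeting_def by (metis assms(1) card_image_le finite_imageI)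
qed

lemma ncomp_meeting_le_1:
  assumes "\<And>y. y \<in> W \<Longrightarrow> (x, y) \<in> conn S F"
  shows "ncomp_meeting S F W \<le> 1"
proof -
  have "(\<lambda>y. conn S F `` {y}) ` W \<subseteq> {conn S F `` {x}}"
    using assms equiv_class_eq[OF equiv_conn] by fastforce
  then have "card ((\<lambda>y. conn S F `` {y}) ` W) \<le> card {conn S F `` {x}}"
    by (rule card_mono[rotated]) simp
  then show ?thesis unfolding ncomp_meeting_def by simp
qed

lemma ncomp_meeting_pos: "finite W \<Longrightarrow> W \<noteq> {} \<Longrightarrow> 1 \<le> ncomp_meeting S F W"
  unfolding ncomp_meeting_def by (simp add: Suc_le_eq card_gt_0_iff)

lemma ncomp_meeting_Un: "ncomp_meeting S F (W \<union> W') \<le> ncomp_meeting S F W + ncomp_meeting S F W'"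
  unfolding ncomp_meeting_def by (simp add: image_Un card_Un_le)

lemma ncomp_meeting_edge:
  assumes "finite e" "e \<subseteq> S" "e \<noteq> {}"
  shows "ncomp_meeting S (insert e F) e = 1"
proof -
  obtain x where "x \<in> e" using assms(3) by blast
  then have "ncomp_meeting S (insert e F) e \<le> 1"
    using assms(2) by (intro ncomp_meeting_le_1) (blast intro: conn_edge)
  with ncomp_meeting_pos[OF assms(1,3), of S "insert e F"] show ?thesis by linarith
qed

text \<open>Submodularity of the rank \<open>card S - ncomp S F\<close>.\<close>
lemma ncomp_submodular:
  assumes fin: "finite S" and D: "finite D" "\<Union>D \<subseteq> S" and G: "\<Union>G \<subseteq> S" and FG: "F \<subseteq> G"
  shows "ncomp S (F \<union> D) + ncomp S G \<le> ncomp S (G \<union> D) + ncomp S F"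
  using D
proof (induction D rule: finite_induct)
  case (insert e D)
  then have e: "e \<subseteq> S" "finite e" using fin finite_subset by auto
  have "ncomp S (F \<union> D) + ncomp_meeting S (insert e (F \<union> D)) e
      = ncomp S (insert e (F \<union> D)) + ncomp_meeting S (F \<union> D) e"
    using insert.prems G FG by (intro ncomp_local_change[OF fin _ _ e(1)]) auto
  moreover have "ncomp S (G \<union> D) + ncomp_meeting S (insert e (G \<union> D)) e
      = ncomp S (insert e (G \<union> D)) + ncomp_meeting S (G \<union> D) e"
    using insert.prems G by (intro ncomp_local_change[OF fin _ _ e(1)]) auto
  moreover have "ncomp_meeting S (insert e (F \<union> D)) e = ncomp_meeting S (insert e (G \<union> D)) e"
    using ncomp_meeting_edge[OF e(2) e(1)] by (cases "e = {}") (simp_all add: ncomp_meeting_def)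
  moreover have "ncomp_meeting S (G \<union> D) e \<le> ncomp_meeting S (F \<union> D) e"
    using FG e(2) by (intro ncomp_meeting_mono linked_mono) auto
  ultimately show ?case using insert by simp
qed simp

lemma ncomp_semimodular_partition:
  assumes fin: "finite S" and P: "is_partition S P" and B: "\<Union>B \<subseteq> S" and C: "\<Union>C \<subseteq> S"
  shows "ncomp S (P \<union> B) + ncomp S (P \<union> C) \<le> ncomp S (P \<union> B \<union> C) + card P"
proof -
  have "finite B" using finite_UnionD finite_subset[OF B fin] by blast
  moreover have "\<Union>P \<subseteq> S" using partition_block_subset[OF P] by blast
  ultimately have "ncomp S (P \<union> B) + ncomp S (P \<union> C) \<le> ncomp S (P \<union> C \<union> B) + ncomp S P"
    using B C by (intro ncomp_submodular[OF fin]) auto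
  then show ?thesis
    by (simp add: ncomp_def quotient_conn_partition[OF P] Un_ac)
qed

lemma conn_insert_isolated:
  assumes X: "X \<subseteq> S" and F: "\<Union>F \<subseteq> S - X"
  shows "x \<in> S - X \<Longrightarrow> conn S (insert X F) `` {x} = conn (S - X) F `` {x}"
    and "x \<in> X \<Longrightarrow> conn S (insert X F) `` {x} = X"
proof -
  assume x: "x \<in> S - X"
  have "conn (S - X) F \<subseteq> conn S (insert X F)"
    using conn_restrict[of "S - X" S F] conn_mono[OF linked_mono[of F "insert X F"]] by blast
  moreover have "conn S (insert X F) `` {x} \<subseteq> conn (S - X) F `` {x}"
  proof (rule conn_class_subset[OF conn_self[OF x]])
    fix e assume e: "e \<in> insert X F" "e \<inter> conn (S - X) F `` {x} \<noteq> {}"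
    have "conn (S - X) F `` {x} \<subseteq> S - X" by (auto simp: conn_def)
    then have "e \<in> F" using e by blast
    then show "e \<subseteq> conn (S - X) F `` {x}"
      using e(2) F equiv_conn[of "S - X" F] by (auto elim!: equivE dest: transD intro: conn_edge)
  qed
  ultimately show "conn S (insert X F) `` {x} = conn (S - X) F `` {x}" by blast
next
  assume x: "x \<in> X"
  have "conn S (insert X F) `` {x} \<subseteq> X"
    using x F by (intro conn_class_subset) auto
  moreover have "X \<subseteq> conn S (insert X F) `` {x}"
    using x X by (blast intro: conn_edge)
  ultimately show "conn S (insert X F) `` {x} = X" by blast
qed

lemma ncomp_insert_isolated:
  assumes fin: "finite S" and X: "X \<subseteq> S" "X \<noteq> {}" and F: "\<Union>F \<subseteq> S - X"
  shows "ncomp S (insert X F) = ncomp (S - X) F + 1"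
proof -
  let ?C = "\<lambda>x. conn S (insert X F) `` {x}"
  have "S // conn S (insert X F) = ?C ` (S - X) \<union> ?C ` X"
    using X(1) by (auto simp: quotient_def)
  also have "?C ` (S - X) = (S - X) // conn (S - X) F"
    using conn_insert_isolated(1)[OF X(1) F] by (auto simp: quotient_def)
  also have "?C ` X = {X}"
    using conn_insert_isolated(2)[OF X(1) F] X(2) by auto
  finally have "S // conn S (insert X F) = insert X ((S - X) // conn (S - X) F)" by simp
  moreover have "X \<notin> (S - X) // conn (S - X) F"
    using X(2) Union_quotient[OF equiv_conn, of "S - X" F] by blast
  ultimately show ?thesis
    unfolding ncomp_def using finite_quotient_conn[of "S - X" F] fin by simp
qed

lemma ncomp_meeting_insert_isolated:
  assumes X: "X \<subseteq> S" "X \<noteq> {}" and F: "\<Union>F \<subseteq> S - X" and P: "finite P" "P \<subseteq> S - X"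
  shows "ncomp_meeting S (insert X F) (X \<union> P) = ncomp_meeting (S - X) F P + 1"
proof -
  let ?C = "\<lambda>x. conn S (insert X F) `` {x}"
  have "?C ` (X \<union> P) = ?C ` X \<union> ?C ` P" by (rule image_Un)
  also have "?C ` X = {X}"
    using conn_insert_isolated(2)[OF X(1) F] X(2) by auto
  also have "?C ` P = (\<lambda>x. conn (S - X) F `` {x}) ` P"
    using conn_insert_isolated(1)[OF X(1) F] P(2) by (auto intro!: image_cong)
  finally have "?C ` (X \<union> P) = insert X ((\<lambda>x. conn (S - X) F `` {x}) ` P)" by simp
  moreover have "X \<notin> (\<lambda>x. conn (S - X) F `` {x}) ` P"
    using X(2) by (auto simp: conn_def)
  ultimately show ?thesis
    unfolding ncomp_meeting_def using P(1) by simp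
qed

text \<open>The block \<open>X\<close> of \<open>insert X F'\<close> is a component of its own.\<close>
lemma ncomp_contract:
  assumes fin: "finite S" and X: "X \<subseteq> S" "X \<noteq> {}" and F: "\<Union>F \<subseteq> S" and F': "\<Union>F' \<subseteq> S - X"
    and P: "P \<subseteq> S - X"
    and old: "\<And>e. e \<in> F - insert X F' \<Longrightarrow> e \<subseteq> X \<union> P"
    and new: "\<And>e. e \<in> insert X F' - F \<Longrightarrow> e \<subseteq> X \<union> P"
  shows "ncomp S F + ncomp_meeting (S - X) F' P = ncomp (S - X) F' + ncomp_meeting S F (X \<union> P)"
proof -
  have "ncomp S F + ncomp_meeting S (insert X F') (X \<union> P)
      = ncomp S (insert X F') + ncomp_meeting S F (X \<union> P)"
    using X F F' P old new by (intro ncomp_differ_within[OF fin]) auto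
  moreover have "finite P" using fin P finite_subset by blast
  ultimately show ?thesis
    using ncomp_insert_isolated[OF fin X F'] ncomp_meeting_insert_isolated[OF X F' _ P] by simp
qed

subsection \<open>Perfect matchings as fixed-point-free involutions\<close>

definition fpf_invol_on :: "'a set \<Rightarrow> ('a \<Rightarrow> 'a) \<Rightarrow> bool" where
  "fpf_invol_on S m \<longleftrightarrow> (\<forall>x\<in>S. m x \<in> S \<and> m x \<noteq> x \<and> m (m x) = x)"

definition mate_edges :: "'a set \<Rightarrow> ('a \<Rightarrow> 'a) \<Rightarrow> 'a set set" where
  "mate_edges S m = (\<lambda>x. {x, m x}) ` S"

lemma fpf_invol_onD:
  "fpf_invol_on S m \<Longrightarrow> x \<in> S \<Longrightarrow> m x \<in> S \<and> m x \<noteq> x \<and> m (m x) = x"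
  by (simp add: fpf_invol_on_def)

lemma mate_edges_subset: "fpf_invol_on S m \<Longrightarrow> \<Union>(mate_edges S m) \<subseteq> S"
  by (auto simp: mate_edges_def fpf_invol_on_def)

lemma mate_edge_eq:
  assumes "fpf_invol_on S m" "x \<in> S" "y \<in> S" "{x, m x} \<inter> {y, m y} \<noteq> {}"
  shows "{x, m x} = {y, m y}"
proof -
  have inv: "m (m x) = x" "m (m y) = y" using fpf_invol_onD[OF assms(1)] assms(2,3) by auto
  obtain z where "z = x \<or> z = m x" "z = y \<or> z = m y" using assms(4) by auto
  then have "x = y \<or> x = m y" using inv by metis
  then show ?thesis
  proof
    assume "x = m y"
    then show ?thesis using inv by (simp add: insert_commute)
  qed simp
qed

lemma is_partition_mate_edges:
  assumes m: "fpf_invol_on S m"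
  shows "is_partition S (mate_edges S m)"
  unfolding is_partition_def
proof (intro conjI ballI impI)
  fix B assume "B \<in> mate_edges S m"
  then show "B \<noteq> {}" by (auto simp: mate_edges_def)
next
  fix B C assume "B \<in> mate_edges S m" "C \<in> mate_edges S m" "B \<noteq> C"
  then obtain x y where "x \<in> S" "y \<in> S" "B = {x, m x}" "C = {y, m y}"
    by (auto simp: mate_edges_def)
  with \<open>B \<noteq> C\<close> show "B \<inter> C = {}" using mate_edge_eq[OF m] by blast
next
  show "\<Union>(mate_edges S m) = S"
    by (rule equalityI[OF mate_edges_subset[OF m]]) (auto simp: mate_edges_def)
qed

lemma card_mate_edges:
  assumes "finite S" "fpf_invol_on S m"
  shows "card S = 2 * card (mate_edges S m)"
proof -
  have P: "is_partition S (mate_edges S m)" by (rule is_partition_mate_edges[OF assms(2)])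
  have "2 * card (mate_edges S m) = card (\<Union>(mate_edges S m))"
  proof (rule card_partition)
    show "finite (mate_edges S m)" using assms(1) by (simp add: mate_edges_def)
    show "finite (\<Union>(mate_edges S m))"
      using finite_subset[OF mate_edges_subset[OF assms(2)] assms(1)] .
    show "\<And>c. c \<in> mate_edges S m \<Longrightarrow> card c = 2"
      using assms(2) by (auto simp: mate_edges_def fpf_invol_on_def)
    show "\<And>c1 c2. c1 \<in> mate_edges S m \<Longrightarrow> c2 \<in> mate_edges S m \<Longrightarrow> c1 \<noteq> c2 \<Longrightarrow> c1 \<inter> c2 = {}"
      using P by (simp add: is_partition_def)
  qed
  moreover have "\<Union>(mate_edges S m) = S" using P by (simp add: is_partition_def)
  ultimately show ?thesis by simp
qed

lemma even_card_fpf_invol: "finite S \<Longrightarrow> fpf_invol_on S m \<Longrightarrow> even (card S)"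
  using card_mate_edges by fastforce

lemma fpf_invol_parity:
  assumes "finite L" "fpf_invol_on L m" "x \<in> L" "fpf_invol_on (L - {x}) m'"
  shows False
proof -
  have "even (card L)" "even (card (L - {x}))"
    using assms even_card_fpf_invol by blast+
  moreover have "card L > 0" using assms(1,3) card_gt_0_iff by blast
  ultimately show False using card_Diff_singleton[OF assms(3)] by presburger
qed

lemma ncomp_mate_edges: "finite S \<Longrightarrow> fpf_invol_on S m \<Longrightarrow> card S = 2 * ncomp S (mate_edges S m)"
  unfolding ncomp_def
  by (simp add: quotient_conn_partition[OF is_partition_mate_edges] card_mate_edges)

lemma perfect_matching_mate:
  assumes P: "is_partition S P" and pm: "perfect_matching P"
  obtains m where "fpf_invol_on S m" "mate_edges S m = P"
proof -
  have unique: "y = z" if "{x, y} \<in> P" "{x, z} \<in> P" "y \<noteq> x" "z \<noteq> x" for x y z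
    using partition_block_unique[OF P that(1,2)] that(3,4) by (metis doubleton_eq_iff insertI1)
  have "\<forall>x\<in>S. \<exists>y. y \<noteq> x \<and> {x, y} \<in> P"
  proof
    fix x assume "x \<in> S"
    then obtain K where "K \<in> P" "x \<in> K" using partition_cover[OF P] by blast
    moreover obtain u v where "K = {u, v}" "u \<noteq> v"
      using pm \<open>K \<in> P\<close> by (auto simp: perfect_matching_def card_2_iff)
    ultimately show "\<exists>y. y \<noteq> x \<and> {x, y} \<in> P" by (metis insert_commute insertE singletonD)
  qed
  then obtain m where m: "\<And>x. x \<in> S \<Longrightarrow> m x \<noteq> x \<and> {x, m x} \<in> P"
    by metis
  have mS: "m x \<in> S" if "x \<in> S" for x
    using m[OF that] partition_block_subset[OF P] by blast
  show ?thesis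
  proof
    show "fpf_invol_on S m"
      unfolding fpf_invol_on_def
    proof
      fix x assume "x \<in> S"
      have "{m x, x} \<in> P" using m[OF \<open>x \<in> S\<close>] by (simp add: insert_commute)
      then have "m (m x) = x" using m[OF mS[OF \<open>x \<in> S\<close>]] m[OF \<open>x \<in> S\<close>] unique by metis
      then show "m x \<in> S \<and> m x \<noteq> x \<and> m (m x) = x" using mS m \<open>x \<in> S\<close> by blast
    qed
    show "mate_edges S m = P"
    proof
      show "mate_edges S m \<subseteq> P" using m by (auto simp: mate_edges_def)
      show "P \<subseteq> mate_edges S m"
      proof
        fix K assume "K \<in> P"
        then obtain u v where K: "K = {u, v}" "u \<noteq> v"
          using pm by (auto simp: perfect_matching_def card_2_iff)
        then have "u \<in> S" using partition_block_subset[OF P \<open>K \<in> P\<close>] by blast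
        then have "v = m u" using unique[of u v "m u"] m K \<open>K \<in> P\<close> by metis
        then show "K \<in> mate_edges S m" using K \<open>u \<in> S\<close> by (auto simp: mate_edges_def)
      qed
    qed
  qed
qed

definition contract_mate :: "'a \<Rightarrow> 'a \<Rightarrow> ('a \<Rightarrow> 'a) \<Rightarrow> 'a \<Rightarrow> 'a" where
  "contract_mate a b m x = (if m x = a then m b else if m x = b then m a else m x)"

definition edges_avoiding :: "'a set \<Rightarrow> 'a set set \<Rightarrow> 'a set set" where
  "edges_avoiding X F = {e \<in> F. e \<inter> X = {}}"

lemma mate_eq_iff: "fpf_invol_on S m \<Longrightarrow> x \<in> S \<Longrightarrow> y \<in> S \<Longrightarrow> m x = y \<longleftrightarrow> m y = x"
  using fpf_invol_onD by metis

context
  fixes S :: "'a set" and m :: "'a \<Rightarrow> 'a" and a b :: 'a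
  assumes m: "fpf_invol_on S m" and a: "a \<in> S" and b: "b \<in> S" and ab: "a \<noteq> b"
begin

lemma fpf_invol_contract_mate: "fpf_invol_on (S - {a, b}) (contract_mate a b m)"
  unfolding fpf_invol_on_def
proof
  fix x assume x: "x \<in> S - {a, b}"
  have inv: "\<And>y. y \<in> S \<Longrightarrow> m y \<in> S \<and> m y \<noteq> y \<and> m (m y) = y" using fpf_invol_onD[OF m] .
  have mab: "m a \<noteq> b \<longleftrightarrow> m b \<noteq> a" using mate_eq_iff[OF m a b] by blast
  show "contract_mate a b m x \<in> S - {a, b} \<and> contract_mate a b m x \<noteq> x \<and>
      contract_mate a b m (contract_mate a b m x) = x"
  proof (cases "m x = a")
    case True
    then have "x = m a" using inv x by force
    then show ?thesis using True inv[OF a] inv[OF b] x ab mab unfolding contract_mate_def by auto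
  next
    case False
    show ?thesis
    proof (cases "m x = b")
      case True
      then have "x = m b" using inv x by force
      then show ?thesis using True inv[OF a] inv[OF b] x ab mab unfolding contract_mate_def by auto
    next
      case False
      with \<open>m x \<noteq> a\<close> show ?thesis using inv x unfolding contract_mate_def by auto
    qed
  qed
qed

lemma mate_edges_split:
  "mate_edges S m = edges_avoiding {a, b} (mate_edges S m) \<union> {{a, m a}, {b, m b}}"
  using a b mate_eq_iff[OF m] fpf_invol_onD[OF m]
  unfolding mate_edges_def edges_avoiding_def by (auto simp: insert_commute)

lemma mate_edges_contract:
  "insert {a, b} (mate_edges (S - {a, b}) (contract_mate a b m))
    = edges_avoiding {a, b} (mate_edges S m) \<union> {{a, b}, {m a, m b}}"
  (is "?L = ?R")
proof
  have inv: "\<And>y. y \<in> S \<Longrightarrow> m y \<in> S \<and> m y \<noteq> y \<and> m (m y) = y" using fpf_invol_onD[OF m] .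
  show "?L \<subseteq> ?R"
  proof
    fix e assume "e \<in> ?L"
    then consider "e = {a, b}" | x where "x \<in> S - {a, b}" "e = {x, contract_mate a b m x}"
      by (auto simp: mate_edges_def)
    then show "e \<in> ?R"
    proof cases
      case (2 x)
      then consider "m x = a" "x = m a" | "m x = b" "x = m b" | "m x \<notin> {a, b}"
        using inv by force
      then show ?thesis
        by cases (use 2 inv in \<open>auto simp: contract_mate_def edges_avoiding_def mate_edges_def
          insert_commute\<close>)
    qed simp
  qed
  show "?R \<subseteq> ?L"
  proof
    fix e assume "e \<in> ?R"
    then consider "e = {a, b}" | "e = {m a, m b}" | x where "x \<in> S" "e = {x, m x}" "e \<inter> {a, b} = {}"
      by (auto simp: edges_avoiding_def mate_edges_def)
    then show "e \<in> ?L"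
    proof cases
      case 2
      show ?thesis
      proof (cases "m a = b")
        case True
        then have "m b = a" using inv[OF a] by blast
        with True 2 show ?thesis by (simp add: insert_commute)
      next
        case False
        then have "m a \<in> S - {a, b}" "contract_mate a b m (m a) = m b"
          using inv[OF a] by (auto simp: contract_mate_def)
        with 2 show ?thesis unfolding mate_edges_def by (intro insertI2 image_eqI[of e _ "m a"]) simp_all
      qed
    next
      case (3 x)
      then have "x \<in> S - {a, b}" "contract_mate a b m x = m x"
        by (auto simp: contract_mate_def)
      with 3 show ?thesis unfolding mate_edges_def by (intro insertI2 image_eqI[of e _ x]) simp_all
    qed simp
  qed
qed

lemma mate_edge_contract_mem:
  "m a \<noteq> b \<Longrightarrow> {m a, m b} \<in> mate_edges (S - {a, b}) (contract_mate a b m)"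
  using fpf_invol_onD[OF m a] unfolding mate_edges_def contract_mate_def
  by (intro image_eqI[of _ _ "m a"]) auto

lemma edges_avoiding_contract:
  "edges_avoiding {a, b} (mate_edges S m) \<subseteq> mate_edges (S - {a, b}) (contract_mate a b m)"
  using mate_edges_contract by (auto simp: edges_avoiding_def)

end

lemma conn_mate:
  "fpf_invol_on S m \<Longrightarrow> mate_edges S m \<subseteq> F \<Longrightarrow> x \<in> S \<Longrightarrow> (x, m x) \<in> conn S F"
  by (rule conn_edge[of "{x, m x}"]) (auto simp: mate_edges_def fpf_invol_on_def)

text \<open>The components of two perfect matchings are alternating cycles, so deleting a vertex
  leaves its two mates connected. The argument is by parity: otherwise the component of
  \<open>B a\<close> would be closed under \<open>C\<close>, and under \<open>B\<close> after removing \<open>B a\<close>.\<close>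
lemma conn_mates_avoiding:
  assumes fin: "finite S" and B: "fpf_invol_on S B" and C: "fpf_invol_on S C"
    and a: "a \<in> S" and b: "b \<in> S"
    and sep: "(a, b) \<notin> conn S (mate_edges S B \<union> mate_edges S C)"
  shows "(B a, C a) \<in> conn S (edges_avoiding {a, b} (mate_edges S B \<union> mate_edges S C))"
proof (rule ccontr)
  let ?D = "mate_edges S B \<union> mate_edges S C"
  let ?Q = "edges_avoiding {a, b} ?D"
  define L where "L = conn S ?Q `` {B a}"
  assume "(B a, C a) \<notin> conn S ?Q"
  then have CaL: "C a \<notin> L" by (simp add: L_def)
  have fpf: "fpf_invol_on S m" if "m \<in> {B, C}" for m using that B C by blast
  have edge: "(x, m x) \<in> conn S ?D" if "x \<in> S" "m \<in> {B, C}" for x m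
    using conn_mate[OF fpf[OF that(2)] _ that(1)] that(2) by blast
  have Ba: "B a \<in> S" using fpf_invol_onD[OF B a] by blast
  have QD: "conn S ?Q \<subseteq> conn S ?D"
    by (rule conn_mono[OF linked_mono]) (auto simp: edges_avoiding_def)
  have reach: "(a, x) \<in> conn S ?D" if "x \<in> L" for x
    using that QD conn_trans[OF edge[OF a]] by (auto simp: L_def)
  have L_sub: "L \<subseteq> S - {a, b}"
    unfolding L_def
  proof (rule conn_class_subset)
    have "B a \<noteq> b" using edge[OF a] sep by auto
    with Ba fpf_invol_onD[OF B a] show "B a \<in> S - {a, b}" by blast
    fix e assume "e \<in> ?Q"
    then show "e \<subseteq> S - {a, b}"
      using mate_edges_subset[OF B] mate_edges_subset[OF C] by (auto simp: edges_avoiding_def)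
  qed
  have closed: "m x \<in> L" if x: "x \<in> L" and mx: "m x \<notin> {a, b}" and m: "m \<in> {B, C}" for x m
  proof -
    have "x \<in> S - {a, b}" using x L_sub by blast
    then have "{x, m x} \<in> ?Q" "m x \<in> S"
      using mx m fpf_invol_onD[OF fpf[OF m]] by (auto simp: edges_avoiding_def mate_edges_def)
    then have "(x, m x) \<in> conn S ?Q" using \<open>x \<in> S - {a, b}\<close> by (blast intro: conn_edge)
    with x show ?thesis by (auto simp: L_def intro: conn_trans)
  qed
  have not_b: "m x \<noteq> b" if x: "x \<in> L" and m: "m \<in> {B, C}" for x m
  proof
    assume "m x = b"
    then have "x = m b" using fpf_invol_onD[OF fpf[OF m]] x L_sub by force
    then have "(x, b) \<in> conn S ?D" using conn_sym[OF edge[OF b m]] by simp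
    with reach[OF x] sep show False by (blast intro: conn_trans)
  qed
  have C_L: "fpf_invol_on L C"
    unfolding fpf_invol_on_def
  proof
    fix x assume x: "x \<in> L"
    have "C x \<noteq> a" using x CaL fpf_invol_onD[OF C] L_sub by force
    then have "C x \<in> L" using closed[OF x] not_b[OF x] by blast
    then show "C x \<in> L \<and> C x \<noteq> x \<and> C (C x) = x" using fpf_invol_onD[OF C] x L_sub by blast
  qed
  have B_L: "fpf_invol_on (L - {B a}) B"
    unfolding fpf_invol_on_def
  proof
    fix x assume x: "x \<in> L - {B a}"
    have inv: "B x \<noteq> x" "B (B x) = x" using fpf_invol_onD[OF B] x L_sub by auto
    have "B x \<noteq> a" using x inv by force
    then have "B x \<in> L" using closed[of x B] not_b[of x B] x by blast
    moreover have "B x \<noteq> B a"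
    proof
      assume "B x = B a"
      then have "x = a" using inv fpf_invol_onD[OF B a] by metis
      with x L_sub show False by blast
    qed
    ultimately show "B x \<in> L - {B a} \<and> B x \<noteq> x \<and> B (B x) = x" using inv by blast
  qed
  have "finite L" using finite_subset[OF _ fin] L_sub by blast
  moreover have "B a \<in> L" using conn_self[OF Ba] by (simp add: L_def)
  ultimately show False using fpf_invol_parity[OF _ C_L _ B_L] by blast
qed

subsection \<open>The genus inequality\<close>

definition partial_matching :: "'a set \<Rightarrow> 'a set set \<Rightarrow> bool" where
  "partial_matching S M \<longleftrightarrow>
     (\<forall>e\<in>M. e \<subseteq> S \<and> card e = 2) \<and> (\<forall>e\<in>M. \<forall>e'\<in>M. e \<noteq> e' \<longrightarrow> e \<inter> e' = {})"

text \<open>For perfect matchings \<open>M\<close>, \<open>B\<close>, \<open>C\<close> this is the Euler genus (twice the number of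
  components minus the Euler characteristic) of the 3-edge-coloured cubic map whose faces are
  the bicoloured cycles.\<close>
definition genus :: "'a set \<Rightarrow> 'a set set \<Rightarrow> ('a \<Rightarrow> 'a) \<Rightarrow> ('a \<Rightarrow> 'a) \<Rightarrow> int" where
  "genus S M B C =
     int (card S) + 2 * int (ncomp S (M \<union> mate_edges S B \<union> mate_edges S C))
     - int (ncomp S (M \<union> mate_edges S B)) - int (ncomp S (M \<union> mate_edges S C))
     - int (ncomp S (mate_edges S B \<union> mate_edges S C)) - int (card M)"

locale contraction =
  fixes S :: "'a set" and a b :: 'a
  assumes fin: "finite S" and a: "a \<in> S" and b: "b \<in> S" and ab: "a \<noteq> b"
begin

abbreviation "S' \<equiv> S - {a, b}"

lemma ncomp_contract_mate_le:
  assumes m: "fpf_invol_on S m" and G: "\<Union>G \<subseteq> S'"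
  shows "ncomp S (insert {a, b} (G \<union> mate_edges S m))
    \<le> ncomp S' (G \<union> mate_edges S' (contract_mate a b m))
      + (if m a = b then 1 else 0)"
proof -
  let ?F = "insert {a, b} (G \<union> mate_edges S m)"
  let ?F' = "G \<union> mate_edges S' (contract_mate a b m)"
  let ?P = "{m a, m b} - {a, b}"
  have ma: "m a \<in> S" "m a \<noteq> a" and mb: "m b \<in> S" using fpf_invol_onD[OF m] a b by auto
  let ?EA = "edges_avoiding {a, b} (mate_edges S m)"
  have old: "?F = insert {a, b} (G \<union> (?EA \<union> {{a, m a}, {b, m b}}))"
    by (rule arg_cong[where f = "\<lambda>A. insert {a, b} (G \<union> A)", OF mate_edges_split[OF m a b ab]])
  have "insert {a, b} ?F' = G \<union> insert {a, b} (mate_edges S' (contract_mate a b m))"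
    by simp
  also have "\<dots> = G \<union> (?EA \<union> {{a, b}, {m a, m b}})"
    by (simp only: mate_edges_contract[OF m a b ab])
  finally have new: "insert {a, b} ?F' = G \<union> (?EA \<union> {{a, b}, {m a, m b}})" .
  have "ncomp S ?F + ncomp_meeting S' ?F' ?P
      = ncomp S' ?F' + ncomp_meeting S ?F ({a, b} \<union> ?P)"
  proof (rule ncomp_contract[OF fin])
    show "\<Union>?F \<subseteq> S" using G a b mate_edges_subset[OF m] by auto
    show "\<Union>?F' \<subseteq> S'"
      using G mate_edges_subset[OF fpf_invol_contract_mate[OF m a b ab]] by auto
    show "\<And>e. e \<in> ?F - insert {a, b} ?F' \<Longrightarrow> e \<subseteq> {a, b} \<union> ?P"
      unfolding old new by auto
    show "\<And>e. e \<in> insert {a, b} ?F' - ?F \<Longrightarrow> e \<subseteq> {a, b} \<union> ?P"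
      unfolding old new by auto
  qed (use a b ma mb in auto)
  moreover have "ncomp_meeting S ?F ({a, b} \<union> ?P) \<le> 1"
  proof (rule ncomp_meeting_le_1)
    have ab_conn: "(a, b) \<in> conn S ?F" using a b by (intro conn_edge[of "{a, b}"]) auto
    have sub: "mate_edges S m \<subseteq> ?F" by blast
    have "(a, m a) \<in> conn S ?F" "(b, m b) \<in> conn S ?F"
      using conn_mate[OF m sub a] conn_mate[OF m sub b] .
    with ab_conn show "(a, y) \<in> conn S ?F" if "y \<in> {a, b} \<union> ?P" for y
      using that conn_self[OF a] by (auto intro: conn_trans)
  qed
  moreover have "1 \<le> ncomp_meeting S' ?F' ?P + (if m a = b then 1 else 0)"
    using ncomp_meeting_pos[of ?P] ma by auto
  ultimately show ?thesis by linarith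
qed

lemma ncomp_meeting_mate_ports:
  assumes m: "fpf_invol_on S m" and F': "mate_edges S' (contract_mate a b m) \<subseteq> F'"
  shows "ncomp_meeting S' F' ({m a, m b} - {a, b}) + (if m a = b then 1 else 0) \<le> 1"
proof (cases "m a = b")
  case True
  then have "m b = a" using fpf_invol_onD[OF m a] by blast
  with True show ?thesis by (simp add: ncomp_meeting_def)
next
  case False
  have "m a \<in> S'" "m b \<in> S'"
    using False fpf_invol_onD[OF m a] fpf_invol_onD[OF m b] by auto
  then have "ncomp_meeting S' F' {m a, m b} \<le> 1"
    using mate_edge_contract_mem[OF m a b ab False] F'
    by (intro ncomp_meeting_le_1[of _ "m a"]) (auto intro: conn_edge)
  moreover have "{m a, m b} - {a, b} = {m a, m b}"
    using \<open>m a \<in> S'\<close> \<open>m b \<in> S'\<close> by auto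
  ultimately show ?thesis using False by simp
qed

end

locale matching_contraction = contraction +
  fixes B C :: "'a \<Rightarrow> 'a"
  assumes B: "fpf_invol_on S B" and C: "fpf_invol_on S C"
begin

abbreviation "B' \<equiv> contract_mate a b B"
abbreviation "C' \<equiv> contract_mate a b C"
abbreviation "ports \<equiv> {B a, B b, C a, C b} - {a, b}"

lemma mates_mem: "B a \<in> S" "B b \<in> S" "C a \<in> S" "C b \<in> S"
  using fpf_invol_onD[OF B a] fpf_invol_onD[OF B b] fpf_invol_onD[OF C a] fpf_invol_onD[OF C b]
  by auto

lemma mate_edges_old:
  "mate_edges S B = edges_avoiding {a, b} (mate_edges S B) \<union> {{a, B a}, {b, B b}}"
  "mate_edges S C = edges_avoiding {a, b} (mate_edges S C) \<union> {{a, C a}, {b, C b}}"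
  using mate_edges_split[OF B a b ab] mate_edges_split[OF C a b ab] .

lemma mate_edges_new:
  "insert {a, b} (mate_edges S' B') = edges_avoiding {a, b} (mate_edges S B) \<union> {{a, b}, {B a, B b}}"
  "insert {a, b} (mate_edges S' C') = edges_avoiding {a, b} (mate_edges S C) \<union> {{a, b}, {C a, C b}}"
  using mate_edges_contract[OF B a b ab] mate_edges_contract[OF C a b ab] .

lemma Union_contracted_mate_edges: "\<Union>(mate_edges S' B' \<union> mate_edges S' C') \<subseteq> S'"
  using mate_edges_subset[OF fpf_invol_contract_mate[OF B a b ab]]
    mate_edges_subset[OF fpf_invol_contract_mate[OF C a b ab]] by blast

lemma ncomp_contract_all_le:
  assumes M': "\<Union>M' \<subseteq> S'"
  shows "ncomp S' (M' \<union> mate_edges S' B' \<union> mate_edges S' C') + 1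
    \<le> ncomp S (insert {a, b} (M' \<union> mate_edges S B \<union> mate_edges S C))
      + ncomp_meeting S' (M' \<union> mate_edges S' B' \<union> mate_edges S' C') ports"
proof -
  let ?F = "insert {a, b} (M' \<union> mate_edges S B \<union> mate_edges S C)"
  let ?F' = "M' \<union> mate_edges S' B' \<union> mate_edges S' C'"
  let ?EB = "edges_avoiding {a, b} (mate_edges S B)" and ?EC = "edges_avoiding {a, b} (mate_edges S C)"
  have old: "?F = insert {a, b} (M' \<union> (?EB \<union> {{a, B a}, {b, B b}}) \<union> (?EC \<union> {{a, C a}, {b, C b}}))"
    using arg_cong2[where f = "\<lambda>X Y. insert {a, b} (M' \<union> X \<union> Y)", OF mate_edges_old] .
  have "insert {a, b} ?F' = M' \<union> insert {a, b} (mate_edges S' B') \<union> insert {a, b} (mate_edges S' C')"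
    by simp
  also have "\<dots> = M' \<union> (?EB \<union> {{a, b}, {B a, B b}}) \<union> (?EC \<union> {{a, b}, {C a, C b}})"
    by (simp only: mate_edges_new)
  finally have new: "insert {a, b} ?F' = \<dots>" .
  have "ncomp S ?F + ncomp_meeting S' ?F' ports = ncomp S' ?F' + ncomp_meeting S ?F ({a, b} \<union> ports)"
  proof (rule ncomp_contract[OF fin])
    show "\<Union>?F \<subseteq> S" using M' a b mate_edges_subset[OF B] mate_edges_subset[OF C] by auto
    show "\<Union>?F' \<subseteq> S'" using M' Union_contracted_mate_edges by auto
    show "\<And>e. e \<in> ?F - insert {a, b} ?F' \<Longrightarrow> e \<subseteq> {a, b} \<union> ports"
      unfolding old new by auto
    show "\<And>e. e \<in> insert {a, b} ?F' - ?F \<Longrightarrow> e \<subseteq> {a, b} \<union> ports"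
      unfolding old new by auto
  qed (use a b mates_mem in auto)
  moreover have "1 \<le> ncomp_meeting S ?F ({a, b} \<union> ports)"
    using fin a b mates_mem by (intro ncomp_meeting_pos) auto
  ultimately show ?thesis by linarith
qed

lemma ncomp_meeting_matchings_le:
  "ncomp_meeting S (mate_edges S B \<union> mate_edges S C) ({a, b} \<union> ports)
    + (if (a, b) \<in> conn S (mate_edges S B \<union> mate_edges S C) then 1 else 0) \<le> 2"
proof -
  let ?F = "mate_edges S B \<union> mate_edges S C"
  have sub: "mate_edges S B \<subseteq> ?F" "mate_edges S C \<subseteq> ?F" by auto
  have edges: "(a, B a) \<in> conn S ?F" "(a, C a) \<in> conn S ?F" "(b, B b) \<in> conn S ?F" "(b, C b) \<in> conn S ?F"
    using conn_mate[OF B sub(1) a] conn_mate[OF C sub(2) a] conn_mate[OF B sub(1) b]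
      conn_mate[OF C sub(2) b] .
  have W: "{a, b} \<union> ports = {a, B a, C a} \<union> {b, B b, C b}" by auto
  show ?thesis
  proof (cases "(a, b) \<in> conn S ?F")
    case True
    have "ncomp_meeting S ?F ({a, b} \<union> ports) \<le> 1"
      unfolding W using True edges conn_self[OF a] by (intro ncomp_meeting_le_1) (auto intro: conn_trans)
    with True show ?thesis by simp
  next
    case False
    have "ncomp_meeting S ?F {a, B a, C a} \<le> 1"
      by (rule ncomp_meeting_le_1[of _ a]) (use edges conn_self[OF a] in auto)
    moreover have "ncomp_meeting S ?F {b, B b, C b} \<le> 1"
      by (rule ncomp_meeting_le_1[of _ b]) (use edges conn_self[OF b] in auto)
    ultimately have "ncomp_meeting S ?F ({a, B a, C a} \<union> {b, B b, C b}) \<le> 2"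
      using ncomp_meeting_Un[of S ?F "{a, B a, C a}" "{b, B b, C b}"] by linarith
    with False show ?thesis unfolding W by simp
  qed
qed

lemma ncomp_contract_matchings_le:
  "ncomp S (mate_edges S B \<union> mate_edges S C) + ncomp_meeting S' (mate_edges S' B' \<union> mate_edges S' C') ports
    + (if (a, b) \<in> conn S (mate_edges S B \<union> mate_edges S C) then 1 else 0)
    \<le> ncomp S' (mate_edges S' B' \<union> mate_edges S' C') + 2"
proof -
  let ?F = "mate_edges S B \<union> mate_edges S C"
  let ?F' = "mate_edges S' B' \<union> mate_edges S' C'"
  let ?EB = "edges_avoiding {a, b} (mate_edges S B)" and ?EC = "edges_avoiding {a, b} (mate_edges S C)"
  have old: "?F = (?EB \<union> {{a, B a}, {b, B b}}) \<union> (?EC \<union> {{a, C a}, {b, C b}})"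
    using arg_cong2[where f = "(\<union>)", OF mate_edges_old] .
  have "insert {a, b} ?F' = insert {a, b} (mate_edges S' B') \<union> insert {a, b} (mate_edges S' C')"
    by simp
  also have "\<dots> = (?EB \<union> {{a, b}, {B a, B b}}) \<union> (?EC \<union> {{a, b}, {C a, C b}})"
    by (simp only: mate_edges_new)
  finally have new: "insert {a, b} ?F' = \<dots>" .
  have "ncomp S ?F + ncomp_meeting S' ?F' ports = ncomp S' ?F' + ncomp_meeting S ?F ({a, b} \<union> ports)"
  proof (rule ncomp_contract[OF fin])
    show "\<Union>?F \<subseteq> S" using mate_edges_subset[OF B] mate_edges_subset[OF C] by auto
    show "\<Union>?F' \<subseteq> S'" using Union_contracted_mate_edges .
    show "\<And>e. e \<in> ?F - insert {a, b} ?F' \<Longrightarrow> e \<subseteq> {a, b} \<union> ports"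
      unfolding old new by auto
    show "\<And>e. e \<in> insert {a, b} ?F' - ?F \<Longrightarrow> e \<subseteq> {a, b} \<union> ports"
      unfolding old new by auto
  qed (use a b mates_mem in auto)
  moreover have "ncomp_meeting S ?F ({a, b} \<union> ports)
      + (if (a, b) \<in> conn S ?F then 1 else 0) \<le> 2"
    by (rule ncomp_meeting_matchings_le)
  ultimately show ?thesis by linarith
qed

lemma ncomp_meeting_ports_le:
  assumes F': "mate_edges S' B' \<union> mate_edges S' C' \<subseteq> F'"
  shows "ncomp_meeting S' F' ports + (if B a = b then 1 else 0) + (if C a = b then 1 else 0) \<le> 2"
proof -
  have "ports = ({B a, B b} - {a, b}) \<union> ({C a, C b} - {a, b})" by auto
  then have "ncomp_meeting S' F' ports
      \<le> ncomp_meeting S' F' ({B a, B b} - {a, b}) + ncomp_meeting S' F' ({C a, C b} - {a, b})"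
    by (simp only: ncomp_meeting_Un)
  moreover have "ncomp_meeting S' F' ({B a, B b} - {a, b}) + (if B a = b then 1 else 0) \<le> 1"
    using F' by (intro ncomp_meeting_mate_ports[OF B]) auto
  moreover have "ncomp_meeting S' F' ({C a, C b} - {a, b}) + (if C a = b then 1 else 0) \<le> 1"
    using F' by (intro ncomp_meeting_mate_ports[OF C]) auto
  ultimately show ?thesis by linarith
qed

lemma ncomp_meeting_ports_separated:
  assumes F': "mate_edges S' B' \<union> mate_edges S' C' \<subseteq> F'"
    and sep: "(a, b) \<notin> conn S (mate_edges S B \<union> mate_edges S C)"
  shows "ncomp_meeting S' F' ports \<le> 1"
proof (rule ncomp_meeting_le_1[of _ "B a"])
  let ?D = "mate_edges S B \<union> mate_edges S C"
  have "B a \<noteq> b" "C a \<noteq> b"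
    using sep conn_mate[OF B _ a, of ?D] conn_mate[OF C _ a, of ?D] by auto
  then have S': "B a \<in> S'" "B b \<in> S'" "C a \<in> S'" "C b \<in> S'"
    using mates_mem fpf_invol_onD[OF B a] fpf_invol_onD[OF B b] fpf_invol_onD[OF C a]
      fpf_invol_onD[OF C b] by auto
  have "(B a, C a) \<in> conn S (edges_avoiding {a, b} ?D)"
    by (rule conn_mates_avoiding[OF fin B C a b sep])
  then have "(B a, C a) \<in> conn S' (edges_avoiding {a, b} ?D)"
    using S' conn_restrict[of S' S] by blast
  moreover have "linked (edges_avoiding {a, b} ?D) \<subseteq> linked F'"
    using edges_avoiding_contract[OF B a b ab] edges_avoiding_contract[OF C a b ab] F'
    by (intro linked_mono) (auto simp: edges_avoiding_def)
  ultimately have BC: "(B a, C a) \<in> conn S' F'" using conn_mono by blast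
  have "(B a, B b) \<in> conn S' F'" "(C a, C b) \<in> conn S' F'"
    using mate_edge_contract_mem[OF B a b ab \<open>B a \<noteq> b\<close>] mate_edge_contract_mem[OF C a b ab \<open>C a \<noteq> b\<close>]
      F' S' by (auto intro: conn_edge)
  with BC show "(B a, y) \<in> conn S' F'" if "y \<in> ports" for y
    using that conn_self[OF S'(1)] by (auto intro: conn_trans)
qed

lemma genus_contract_le:
  assumes M': "\<Union>M' \<subseteq> S'" "finite M'"
  shows "genus S' M' B' C' \<le> genus S (insert {a, b} M') B C"
proof -
  let ?D = "mate_edges S B \<union> mate_edges S C"
  let ?pT = "ncomp_meeting S' (M' \<union> mate_edges S' B' \<union> mate_edges S' C') ports"
  let ?pD = "ncomp_meeting S' (mate_edges S' B' \<union> mate_edges S' C') ports"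
  have c0: "ncomp S (insert {a, b} M' \<union> mate_edges S B)
      \<le> ncomp S' (M' \<union> mate_edges S' B') + (if B a = b then 1 else 0)"
    using ncomp_contract_mate_le[OF B M'(1)] by simp
  have c1: "ncomp S (insert {a, b} M' \<union> mate_edges S C)
      \<le> ncomp S' (M' \<union> mate_edges S' C') + (if C a = b then 1 else 0)"
    using ncomp_contract_mate_le[OF C M'(1)] by simp
  have t: "ncomp S' (M' \<union> mate_edges S' B' \<union> mate_edges S' C') + 1
      \<le> ncomp S (insert {a, b} M' \<union> mate_edges S B \<union> mate_edges S C) + ?pT"
    using ncomp_contract_all_le[OF M'(1)] by simp
  have r: "ncomp S ?D + ?pD + (if (a, b) \<in> conn S ?D then 1 else 0)
      \<le> ncomp S' (mate_edges S' B' \<union> mate_edges S' C') + 2"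
    by (rule ncomp_contract_matchings_le)
  have pTD: "?pT \<le> ?pD"
    using fin by (intro ncomp_meeting_mono linked_mono) auto
  have pT: "?pT + (if B a = b then 1 else 0) + (if C a = b then 1 else 0) \<le> 2"
    by (rule ncomp_meeting_ports_le) auto
  have "card {a, b} \<le> card S" using fin a b by (intro card_mono) auto
  then have "card S = card S' + 2" using fin a b ab by (simp add: card_Diff_subset)
  moreover have "{a, b} \<notin> M'" using M'(1) by blast
  then have "card (insert {a, b} M') = card M' + 1" using M'(2) by simp
  moreover have "ncomp S (insert {a, b} M' \<union> mate_edges S B) + ncomp S (insert {a, b} M' \<union> mate_edges S C)
      + ncomp S ?D + card M' + 1 + 2 * ncomp S' (M' \<union> mate_edges S' B' \<union> mate_edges S' C')
    \<le> 2 * ncomp S (insert {a, b} M' \<union> mate_edges S B \<union> mate_edges S C) + 2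
      + ncomp S' (M' \<union> mate_edges S' B') + ncomp S' (M' \<union> mate_edges S' C')
      + ncomp S' (mate_edges S' B' \<union> mate_edges S' C') + card M'"
    \<comment> \<open>If \<open>a\<close> and \<open>b\<close> lie on different cycles of \<open>B \<or> C\<close>, contraction merges these two
      cycles, but then all ports stay connected.\<close>
  proof (cases "(a, b) \<in> conn S ?D")
    case True
    with c0 c1 t r pTD pT show ?thesis by simp
  next
    case False
    then have "B a \<noteq> b" "C a \<noteq> b"
      using conn_mate[OF B _ a, of ?D] conn_mate[OF C _ a, of ?D] by auto
    moreover have "?pT \<le> 1" by (rule ncomp_meeting_ports_separated[OF _ False]) auto
    ultimately show ?thesis using False c0 c1 t r pTD by simp
  qed
  ultimately show ?thesis unfolding genus_def by linarith
qed

end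

lemma genus_nonneg:
  assumes "finite S" "fpf_invol_on S B" "fpf_invol_on S C" "partial_matching S M"
  shows "0 \<le> genus S M B C"
proof -
  have "finite M"
    using assms(1,4) by (auto simp: partial_matching_def intro: finite_subset[of M "Pow S"])
  then show ?thesis
    using assms
  proof (induction M arbitrary: S B C rule: finite_induct)
    case empty
    then have "card S = 2 * ncomp S (mate_edges S B)" "card S = 2 * ncomp S (mate_edges S C)"
      using ncomp_mate_edges by blast+
    then show ?case by (simp add: genus_def)
  next
    case (insert e M)
    then have "e \<subseteq> S" "card e = 2" by (auto simp: partial_matching_def)
    then obtain a b where e: "e = {a, b}" "a \<noteq> b" "a \<in> S" "b \<in> S"
      by (auto simp: card_2_iff)
    have disj: "e' \<inter> {a, b} = {}" if "e' \<in> M" for e'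
      using insert.prems(4) insert.hyps(2) that e(1) by (auto simp: partial_matching_def)
    then have "partial_matching (S - {a, b}) M"
      using insert.prems(4) by (auto simp: partial_matching_def)
    then have "0 \<le> genus (S - {a, b}) M (contract_mate a b B) (contract_mate a b C)"
      using insert.prems(1) fpf_invol_contract_mate[OF insert.prems(2) e(3,4,2)]
        fpf_invol_contract_mate[OF insert.prems(3) e(3,4,2)]
      by (intro insert.IH) auto
    moreover have "genus (S - {a, b}) M (contract_mate a b B) (contract_mate a b C)
        \<le> genus S (insert e M) B C"
    proof -
      interpret matching_contraction S a b B C
        using insert.prems(1-3) e(2-4) by unfold_locales
      have "\<Union>M \<subseteq> S - {a, b}"
        using disj insert.prems(4) by (auto simp: partial_matching_def)
      then show ?thesis
        unfolding e(1) by (rule genus_contract_le[OF _ insert.hyps(1)])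
    qed
    ultimately show ?case by linarith
  qed
qed

lemma partial_matching_in_partition:
  assumes P: "is_partition S P" and big: "\<forall>K\<in>P. 2 \<le> card K"
  obtains M where "partial_matching S M" "card M = card P" "linked M \<subseteq> linked P"
proof -
  have "\<forall>K\<in>P. \<exists>e. e \<subseteq> K \<and> card e = 2"
    using big obtain_subset_with_card_n by metis
  then obtain f where f: "\<And>K. K \<in> P \<Longrightarrow> f K \<subseteq> K \<and> card (f K) = 2"
    by metis
  have ne: "f K \<noteq> {}" if "K \<in> P" for K using f[OF that] by auto
  have disj: "f K \<inter> f K' = {}" if "K \<in> P" "K' \<in> P" "K \<noteq> K'" for K K'
    using f that partition_block_unique[OF P] by blast
  show ?thesis
  proof
    show "partial_matching S (f ` P)"
      unfolding partial_matching_def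
      using f partition_block_subset[OF P] disj by blast
    have "inj_on f P"
    proof (rule inj_onI)
      fix K K' assume "K \<in> P" "K' \<in> P" "f K = f K'"
      then show "K = K'" using disj[of K K'] ne[of K] by auto
    qed
    then show "card (f ` P) = card P" by (rule card_image)
    show "linked (f ` P) \<subseteq> linked P"
      using f by (auto simp: linked_def)
  qed
qed

lemma genus_bound_partition:
  assumes fin: "finite S" and B: "fpf_invol_on S B" and C: "fpf_invol_on S C"
    and P: "is_partition S P" and big: "\<forall>K\<in>P. 2 \<le> card K"
  shows "ncomp S (P \<union> mate_edges S B) + ncomp S (P \<union> mate_edges S C)
      + ncomp S (mate_edges S B \<union> mate_edges S C) + card P
    \<le> card S + 2 * ncomp S (P \<union> mate_edges S B \<union> mate_edges S C)"
proof -
  obtain M where M: "partial_matching S M" "card M = card P" "linked M \<subseteq> linked P"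
    using partial_matching_in_partition[OF P big] .
  let ?EB = "mate_edges S B" and ?EC = "mate_edges S C"
  have absorb: "ncomp S (M \<union> X \<union> P) = ncomp S (P \<union> X)" for X
    using M(3) by (intro ncomp_cong) (auto simp: linked_Un)
  have U: "\<Union>(M \<union> ?EB \<union> ?EC) \<subseteq> S" "\<Union>P \<subseteq> S" "finite P"
    using M(1) mate_edges_subset[OF B] mate_edges_subset[OF C] P fin
    by (auto simp: partial_matching_def is_partition_def intro: finite_UnionD)
  have "ncomp S (M \<union> ?EB \<union> P) + ncomp S (M \<union> ?EB \<union> ?EC)
      \<le> ncomp S (M \<union> ?EB \<union> ?EC \<union> P) + ncomp S (M \<union> ?EB)"
    using U by (intro ncomp_submodular[OF fin]) auto
  moreover have "ncomp S (M \<union> ?EC \<union> P) + ncomp S (M \<union> ?EB \<union> ?EC)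
      \<le> ncomp S (M \<union> ?EB \<union> ?EC \<union> P) + ncomp S (M \<union> ?EC)"
    using U by (intro ncomp_submodular[OF fin]) auto
  moreover have "0 \<le> genus S M B C" by (rule genus_nonneg[OF fin B C M(1)])
  ultimately show ?thesis
    using absorb[of ?EB] absorb[of ?EC] absorb[of "?EB \<union> ?EC"] M(2)
    unfolding genus_def by (simp add: Un_assoc)
qed

theorem proposition3p1:
  fixes k :: nat and P0 P1 P :: "nat set set"
  assumes "0 < k"
    and "P0 \<in> Part2 (2*k)" and "P1 \<in> Part2 (2*k)" and "P \<in> Part2 (2*k)"
    and "perfect_matching P0" and "perfect_matching P1"
    and "card (join {1..2*k} (join {1..2*k} P0 P1) P) = 1"
  shows "card (join {1..2*k} P0 P) + card (join {1..2*k} P1 P) \<le> 1 + card P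
       \<and> 1 + card P \<le> k + 1
       \<and> (card (join {1..2*k} P0 P1) > 1 \<longrightarrow>
           card (join {1..2*k} P0 P) + card (join {1..2*k} P1 P)
             \<le> k + 1 - card (join {1..2*k} P0 P1) div 2)"
proof -
  let ?S = "{1..2*k}"
  have parts: "is_partition ?S P0" "is_partition ?S P1" "is_partition ?S P"
    and big: "\<forall>K\<in>P. 2 \<le> card K"
    using assms(2-4) by (auto simp: Part2_def Part_def)
  obtain B where B: "fpf_invol_on ?S B" "mate_edges ?S B = P0"
    using perfect_matching_mate[OF parts(1) assms(5)] .
  obtain C where C: "fpf_invol_on ?S C" "mate_edges ?S C = P1"
    using perfect_matching_mate[OF parts(2) assms(6)] .
  have joins: "card (join ?S P0 P) = ncomp ?S (P \<union> P0)" "card (join ?S P1 P) = ncomp ?S (P \<union> P1)"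
    "card (join ?S P0 P1) = ncomp ?S (P0 \<union> P1)"
    using parts by (simp_all add: card_join Un_commute)
  have one: "ncomp ?S (P \<union> P0 \<union> P1) = 1"
    using assms(7) card_join_join[OF parts] by (simp add: Un_ac)
  have genus: "ncomp ?S (P \<union> P0) + ncomp ?S (P \<union> P1) + ncomp ?S (P0 \<union> P1) + card P \<le> 2 * k + 2"
    using genus_bound_partition[OF _ B(1) C(1) parts(3) big] B(2) C(2) one by simp
  have semimodular: "ncomp ?S (P \<union> P0) + ncomp ?S (P \<union> P1) \<le> 1 + card P"
    using ncomp_semimodular_partition[OF _ parts(3), of P0 P1] parts(1,2) one
    by (simp add: partition_block_subset Union_least)
  have "card P \<le> k" using card_partition_le[OF _ parts(3) big] by simp
  moreover have "x \<le> k + 1 - r div 2"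
    if "x + r + n \<le> 2 * k + 2" "x \<le> 1 + n" "n \<le> k" for x r n :: nat
  proof -
    have "2 * (r div 2) \<le> r" by simp
    with that show ?thesis by linarith
  qed
  ultimately show ?thesis
    unfolding joins using genus semimodular by simp
qed

end
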